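(* Let $\mathcal{I}\in\mathrm{Ins}(\Omega,\mathcal{H},\mathcal{K})$ be an indecomposable instrument. Then every instrument $\mathcal{J}\in\mathrm{Ins}(\Lambda,\mathcal{H},\mathcal{V})$ that is compatible with $\mathcal{I}$ is of the form $\mathcal{J}_y(\varrho)=\sum_{x\in\Omega}\mathrm{tr}[\nu_{xy}\mathsf{A}^{\mathcal{I}}(x)\varrho]\,\xi_{xy}$ for all $y\in\Lambda$ and states $\varrho$, for some family of states $\{\xi_{xy}\}_{x\in\Omega,y\in\Lambda}$ on $\mathcal{V}$ and some stochastic matrix $\nu=(\nu_{xy})_{x\in\Omega,y\in\Lambda}$ (i.e. $\nu_{xy}\ge 0$ and $\sum_y\nu_{xy}=1$ for all $x$).
   Context: All Hilbert spaces are finite-dimensional and complex, and all outcome sets are finite. An instrument $\mathcal{I}\in\mathrm{Ins}(\Omega,\mathcal{H},\mathcal{K})$ is a family $(\mathcal{I}_x)_{x\in\Omega}$ of completely positive trace-nonincreasing linear maps $\mathcal{L}(\mathcal{H})\to\mathcal{L}(\mathcal{K})$ whose sum is trace preserving; its induced POVM is given by $\mathrm{tr}[\mathsf{A}^{\mathcal{I}}(x)\varrho]=\mathrm{tr}[\mathcal{I}_x(\varrho)]$. $\mathcal{I}$ is indecomposable if each nonzero $\mathcal{I}_x$ has Kraus rank 1, i.e. $\mathcal{I}_x(\varrho)=K_x\varrho K_x^*$ for some operator $K_x:\mathcal{H}\to\mathcal{K}$. Two instruments $\mathcal{I}\in\mathrm{Ins}(\Omega,\mathcal{H},\mathcal{K})$,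 $\mathcal{J}\in\mathrm{Ins}(\Lambda,\mathcal{H},\mathcal{V})$ are compatible if there is $\mathcal{G}\in\mathrm{Ins}(\Omega\times\Lambda,\mathcal{H},\mathcal{K}\otimes\mathcal{V})$ with $\sum_{x}\mathrm{tr}_{\mathcal{K}}[\mathcal{G}_{(x,y)}(\varrho)]=\mathcal{J}_y(\varrho)$ for all $y$ and $\sum_y\mathrm{tr}_{\mathcal{V}}[\mathcal{G}_{(x,y)}(\varrho)]=\mathcal{I}_x(\varrho)$ for all $x$, for all states $\varrho$. *)

theory Defs
  imports Complex_Main "HOL-Library.Function_Algebras"
begin

text \<open>Finite-dimensional Hilbert spaces are modelled as l2 over a finite index type;
  an operator from C^'a to C^'b is a matrix 'b => 'a => complex (w.r.t. the standard basis).
  The tensor product K (x) V is indexed by the product type 'k * 'v.\<close>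

type_synonym ('b, 'a) lmat = "'b \<Rightarrow> 'a \<Rightarrow> complex"

definition op_trace :: "('a::finite, 'a) lmat \<Rightarrow> complex" where
  "op_trace M = (\<Sum>i\<in>UNIV. M i i)"

definition op_mult :: "('c, 'b::finite) lmat \<Rightarrow> ('b, 'a) lmat \<Rightarrow> ('c, 'a) lmat" where
  "op_mult A B = (\<lambda>i j. \<Sum>k\<in>UNIV. A i k * B k j)"

definition op_scale :: "complex \<Rightarrow> ('b, 'a) lmat \<Rightarrow> ('b, 'a) lmat" where
  "op_scale c A = (\<lambda>i j. c * A i j)"

definition psd_on :: "'a set \<Rightarrow> ('a, 'a) lmat \<Rightarrow> bool" where
  "psd_on S M \<longleftrightarrow> (\<forall>v :: 'a \<Rightarrow> complex.
     let q = (\<Sum>i\<in>S. \<Sum>j\<in>S. cnj (v i) * M i j * v j) in Im q = 0 \<and> Re q \<ge> 0)"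

definition psd :: "('a, 'a) lmat \<Rightarrow> bool" where
  "psd M \<longleftrightarrow> psd_on UNIV M"

definition is_state :: "('a::finite, 'a) lmat \<Rightarrow> bool" where
  "is_state \<rho> \<longleftrightarrow> psd \<rho> \<and> op_trace \<rho> = 1"

definition lin_map :: "(('a, 'a) lmat \<Rightarrow> ('b, 'b) lmat) \<Rightarrow> bool" where
  "lin_map \<Phi> \<longleftrightarrow> (\<forall>X Y. \<Phi> (X + Y) = \<Phi> X + \<Phi> Y) \<and> (\<forall>c X. \<Phi> (op_scale c X) = op_scale c (\<Phi> X))"

text \<open>Complete positivity: id_n (x) Phi is positive for every ancilla dimension n;
  operators on C^n (x) H are matrices indexed by {..<n} x UNIV.\<close>
definition ampliate :: "nat \<Rightarrow> (('a, 'a) lmat \<Rightarrow> ('b, 'b) lmat) \<Rightarrow> (nat \<times> 'a, nat \<times> 'a) lmat \<Rightarrow> (nat \<times> 'b, nat \<times> 'b) lmat" where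
  "ampliate n \<Phi> X = (\<lambda>(i, a) (j, b). if i < n \<and> j < n then \<Phi> (\<lambda>a' b'. X (i, a') (j, b')) a b else 0)"

definition completely_positive :: "(('a, 'a) lmat \<Rightarrow> ('b, 'b) lmat) \<Rightarrow> bool" where
  "completely_positive \<Phi> \<longleftrightarrow> lin_map \<Phi> \<and>
     (\<forall>n X. psd_on ({..<n} \<times> UNIV) X \<longrightarrow> psd_on ({..<n} \<times> UNIV) (ampliate n \<Phi> X))"

definition trace_nonincreasing :: "(('a::finite, 'a) lmat \<Rightarrow> ('b::finite, 'b) lmat) \<Rightarrow> bool" where
  "trace_nonincreasing \<Phi> \<longleftrightarrow> (\<forall>\<rho>. psd \<rho> \<longrightarrow> Re (op_trace (\<Phi> \<rho>)) \<le> Re (op_trace \<rho>))"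

definition instrument :: "('x::finite \<Rightarrow> ('a::finite, 'a) lmat \<Rightarrow> ('b::finite, 'b) lmat) \<Rightarrow> bool" where
  "instrument I \<longleftrightarrow> (\<forall>x. completely_positive (I x) \<and> trace_nonincreasing (I x)) \<and>
     (\<forall>X. op_trace (\<Sum>x\<in>UNIV. I x X) = op_trace X)"

definition induced_povm :: "('x \<Rightarrow> ('a::finite, 'a) lmat \<Rightarrow> ('b::finite, 'b) lmat) \<Rightarrow> 'x \<Rightarrow> ('a, 'a) lmat" where
  "induced_povm I x = (SOME A. \<forall>\<rho>. is_state \<rho> \<longrightarrow> op_trace (op_mult A \<rho>) = op_trace (I x \<rho>))"

definition kraus1 :: "('b, 'a::finite) lmat \<Rightarrow> ('a, 'a) lmat \<Rightarrow> ('b, 'b) lmat" where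
  "kraus1 K \<rho> = (\<lambda>a b. \<Sum>i\<in>UNIV. \<Sum>j\<in>UNIV. K a i * \<rho> i j * cnj (K b j))"

definition indecomposable :: "('x \<Rightarrow> ('a::finite, 'a) lmat \<Rightarrow> ('b, 'b) lmat) \<Rightarrow> bool" where
  "indecomposable I \<longleftrightarrow> (\<forall>x. I x \<noteq> (\<lambda>_. 0) \<longrightarrow> (\<exists>K. I x = kraus1 K))"

definition ptrace1 :: "('k::finite \<times> 'v, 'k \<times> 'v) lmat \<Rightarrow> ('v, 'v) lmat" where
  "ptrace1 M = (\<lambda>v v'. \<Sum>k\<in>UNIV. M (k, v) (k, v'))"

definition ptrace2 :: "('k \<times> 'v::finite, 'k \<times> 'v) lmat \<Rightarrow> ('k, 'k) lmat" where
  "ptrace2 M = (\<lambda>k k'. \<Sum>v\<in>UNIV. M (k, v) (k', v))"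

definition compatible ::
  "('x::finite \<Rightarrow> ('a::finite, 'a) lmat \<Rightarrow> ('k::finite, 'k) lmat) \<Rightarrow>
   ('y::finite \<Rightarrow> ('a, 'a) lmat \<Rightarrow> ('v::finite, 'v) lmat) \<Rightarrow> bool" where
  "compatible I J \<longleftrightarrow> (\<exists>G :: 'x \<times> 'y \<Rightarrow> ('a, 'a) lmat \<Rightarrow> ('k \<times> 'v, 'k \<times> 'v) lmat.
      instrument G \<and>
      (\<forall>\<rho>. is_state \<rho> \<longrightarrow>
         (\<forall>y. (\<Sum>x\<in>UNIV. ptrace1 (G (x, y) \<rho>)) = J y \<rho>) \<and>
         (\<forall>x. (\<Sum>y\<in>UNIV. ptrace2 (G (x, y) \<rho>)) = I x \<rho>)))"

end

theory Submission
  imports Defs "HOL-Library.Complex_Order"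
begin

text \<open>Let \<open>G\<close> be a joint instrument and fix \<open>x\<close>. The maps \<open>G(x,y)\<close> are completely positive
  and their \<open>\<K>\<close>-marginals add up to \<open>I\<^sub>x(\<rho>) = K \<rho> K\<^sup>*\<close>. Feeding a block vector \<open>\<oplus>\<^sub>i h\<^sub>i\<close>
  into an ampliation of \<open>G(x,y)\<close> gives a positive operator \<open>M\<close> with
  \<open>0 \<le> tr\<^sub>\<V> M \<le> |w\<rangle>\<langle>w|\<close>, where \<open>w = \<oplus>\<^sub>i K h\<^sub>i\<close>. Such an \<open>M\<close> vanishes on every
  \<open>u \<otimes> e\<^sub>v\<close> with \<open>u \<perp> w\<close>, hence equals \<open>|w\<rangle>\<langle>w| \<otimes> \<tau>\<close>. Therefore
  \<open>G(x,y)(\<rho>) = K \<rho> K\<^sup>* \<otimes> \<tau>(x,y)\<close>, whose \<open>\<V>\<close>-marginal is \<open>tr[A(x) \<rho>] \<tau>(x,y)\<close>, and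
  \<open>\<tau>(x,y) = \<nu>(x,y) \<xi>(x,y)\<close> for a state \<open>\<xi>(x,y)\<close>. The \<open>\<nu>(x,y)\<close> sum to \<open>1\<close> over \<open>y\<close>
  because the \<open>\<K>\<close>-marginals reproduce \<open>K \<rho> K\<^sup>*\<close>.\<close>

lemma sum_fun_apply: "(sum f A) x = (\<Sum>i\<in>A. f i x)"
  by (induction A rule: infinite_finite_induct) auto

lemma op_scale_0_left [simp]: "op_scale 0 X = 0"
  by (simp add: op_scale_def zero_fun_def)

lemma op_scale_1 [simp]: "op_scale 1 X = X"
  by (simp add: op_scale_def)

lemma op_scale_scale: "op_scale a (op_scale b X) = op_scale (a * b) X"
  by (simp add: op_scale_def mult.assoc)

lemma op_scale_sum: "op_scale c (sum f A) = (\<Sum>a\<in>A. op_scale c (f a))"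
  by (intro ext) (simp add: op_scale_def sum_fun_apply sum_distrib_left)

lemma sum_op_scale: "(\<Sum>y\<in>Y. op_scale (c y) A) = op_scale (\<Sum>y\<in>Y. c y) A"
  by (intro ext) (simp add: op_scale_def sum_fun_apply sum_distrib_right)

lemma op_scale_eq_self_imp_1:
  assumes "op_scale c A = A" and "A \<noteq> 0"
  shows "c = 1"
proof -
  obtain a b where "A a b \<noteq> 0"
    using assms(2) by (auto simp: fun_eq_iff)
  moreover have "c * A a b = A a b"
    using assms(1) by (metis op_scale_def)
  ultimately show ?thesis by simp
qed

lemma op_trace_0 [simp]: "op_trace 0 = 0"
  by (simp add: op_trace_def)

lemma op_trace_scale: "op_trace (op_scale c X) = c * op_trace X"
  by (simp add: op_trace_def op_scale_def sum_distrib_left)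

lemma op_trace_sum: "op_trace (sum f A) = (\<Sum>a\<in>A. op_trace (f a))"
  by (simp add: op_trace_def sum_fun_apply sum.swap[of _ A])

lemma op_trace_mult_scale: "op_trace (op_mult (op_scale c A) \<rho>) = c * op_trace (op_mult A \<rho>)"
  by (simp add: op_trace_def op_mult_def op_scale_def sum_distrib_left mult.assoc)

lemma lin_map_zero: "lin_map L \<Longrightarrow> L 0 = 0"
  unfolding lin_map_def by (metis op_scale_0_left)

lemma lin_map_sum:
  assumes "lin_map L"
  shows "L (sum f A) = (\<Sum>a\<in>A. L (f a))"
proof (induction A rule: infinite_finite_induct)
  case (insert a A)
  have "L (f a + sum f A) = L (f a) + L (sum f A)"
    using assms by (simp only: lin_map_def)
  then show ?case
    using insert.IH by (simp only: sum.insert[OF insert.hyps])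
qed (metis sum.infinite sum.empty lin_map_zero[OF assms])+

lemma lin_map_sum_maps: "(\<And>y. lin_map (F y)) \<Longrightarrow> lin_map (\<lambda>X. \<Sum>y\<in>Y. F y X)"
  unfolding lin_map_def by (simp add: sum.distrib op_scale_sum)

lemma lin_map_ptrace2_comp: "lin_map \<Phi> \<Longrightarrow> lin_map (\<lambda>X. ptrace2 (\<Phi> X))"
  unfolding lin_map_def ptrace2_def op_scale_def
  by (auto intro!: ext simp: sum.distrib sum_distrib_left)

lemma lin_map_kraus1: "lin_map (kraus1 K)"
  unfolding lin_map_def kraus1_def op_scale_def
  by (auto intro!: ext simp: algebra_simps sum.distrib sum_distrib_left)

lemma completely_positive_lin_map: "completely_positive \<Phi> \<Longrightarrow> lin_map \<Phi>"
  by (simp add: completely_positive_def)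

definition rank1 :: "('b \<Rightarrow> complex) \<Rightarrow> ('a \<Rightarrow> complex) \<Rightarrow> ('b, 'a) lmat" where
  "rank1 h g = (\<lambda>a b. h a * cnj (g b))"

definition delta :: "'a \<Rightarrow> 'a \<Rightarrow> complex" where
  "delta i = (\<lambda>a. if a = i then 1 else 0)"

definition matvec :: "('k, 'h) lmat \<Rightarrow> ('h::finite \<Rightarrow> complex) \<Rightarrow> 'k \<Rightarrow> complex" where
  "matvec K h = (\<lambda>k. \<Sum>a\<in>UNIV. K k a * h a)"

definition tens :: "('k, 'k) lmat \<Rightarrow> ('v, 'v) lmat \<Rightarrow> ('k \<times> 'v, 'k \<times> 'v) lmat" where
  "tens A \<tau> = (\<lambda>p q. A (fst p) (fst q) * \<tau> (snd p) (snd q))"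

lemma kraus1_rank1: "kraus1 K (rank1 h g) = rank1 (matvec K h) (matvec K g)"
  unfolding kraus1_def rank1_def matvec_def
  by (intro ext) (simp add: sum_product cnj_sum algebra_simps)

lemma lin_map_tens_kraus1: "lin_map (\<lambda>X. tens (kraus1 K X) \<tau>)"
  using lin_map_kraus1[of K] unfolding lin_map_def tens_def op_scale_def
  by (auto intro!: ext simp: algebra_simps)

lemma ptrace1_tens: "ptrace1 (tens A \<tau>) = op_scale (op_trace A) \<tau>"
  unfolding ptrace1_def tens_def op_scale_def op_trace_def
  by (intro ext) (simp add: sum_distrib_right)

lemma ptrace2_tens: "ptrace2 (tens A \<tau>) = op_scale (op_trace \<tau>) A"
  unfolding ptrace2_def tens_def op_scale_def op_trace_def
  by (intro ext) (simp add: sum_distrib_left mult.commute)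

lemma tens_rank1_cancel:
  assumes "w \<noteq> 0" and "tens (rank1 w w) \<tau>1 = tens (rank1 w w) \<tau>2"
  shows "\<tau>1 = \<tau>2"
proof (intro ext)
  fix v v'
  obtain k where k: "w k \<noteq> 0"
    using assms(1) by (auto simp: fun_eq_iff)
  have "tens (rank1 w w) \<tau>1 (k, v) (k, v') = tens (rank1 w w) \<tau>2 (k, v) (k, v')"
    using assms(2) by simp
  then show "\<tau>1 v v' = \<tau>2 v v'"
    using k by (simp add: tens_def rank1_def)
qed

lemma indecomposable_imp_kraus1:
  assumes "indecomposable I"
  shows "\<exists>K. I x = kraus1 K"
proof (cases "I x = (\<lambda>_. 0)")
  case True
  then have "I x = kraus1 (\<lambda>_ _. 0)"
    by (simp add: kraus1_def fun_eq_iff zero_fun_def)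
  then show ?thesis by blast
next
  case False
  then show ?thesis
    using assms unfolding indecomposable_def by blast
qed

section \<open>Positive sesquilinear forms\<close>

definition sesq_on :: "'a set \<Rightarrow> ('a, 'a) lmat \<Rightarrow> ('a \<Rightarrow> complex) \<Rightarrow> ('a \<Rightarrow> complex) \<Rightarrow> complex" where
  "sesq_on S M u z = (\<Sum>i\<in>S. \<Sum>j\<in>S. cnj (u i) * M i j * z j)"

lemma psd_on_iff_sesq_on: "psd_on S M \<longleftrightarrow> (\<forall>v. sesq_on S M v v \<ge> 0)"
  by (auto simp: psd_on_def sesq_on_def less_eq_complex_def Let_def)

lemma sesq_on_add_scaled:
  "sesq_on S M (\<lambda>i. u i + t * z i) (\<lambda>i. u i + t * z i) =
   sesq_on S M u u + t * sesq_on S M u z + cnj t * sesq_on S M z u + cnj t * t * sesq_on S M z z"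
  unfolding sesq_on_def by (simp add: sum_distrib_left sum.distrib[symmetric] algebra_simps)

lemma sesq_on_diff: "sesq_on S (M - N) u z = sesq_on S M u z - sesq_on S N u z"
  unfolding sesq_on_def by (simp add: algebra_simps sum_subtractf)

lemma sesq_on_sum: "sesq_on S (sum F Y) u z = (\<Sum>y\<in>Y. sesq_on S (F y) u z)"
  unfolding sesq_on_def sum_fun_apply
  by (simp add: sum_distrib_left sum_distrib_right sum.swap[of _ Y])

lemma sesq_on_scale: "sesq_on S (op_scale c M) u z = c * sesq_on S M u z"
  unfolding sesq_on_def op_scale_def by (simp add: sum_distrib_left algebra_simps)

lemma sesq_on_rank1:
  "sesq_on S (rank1 h g) u z = (\<Sum>i\<in>S. cnj (u i) * h i) * cnj (\<Sum>j\<in>S. cnj (z j) * g j)"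
  unfolding sesq_on_def rank1_def by (simp add: sum_product cnj_sum algebra_simps)

lemma sesq_on_delta_right:
  assumes "finite S" "q \<in> S"
  shows "sesq_on S M u (delta q) = (\<Sum>p\<in>S. cnj (u p) * M p q)"
proof -
  have "sesq_on S M u (delta q) = (\<Sum>p\<in>S. \<Sum>j\<in>S. if j = q then cnj (u p) * M p j else 0)"
    unfolding sesq_on_def delta_def by (intro sum.cong) auto
  then show ?thesis using assms by simp
qed

lemma sesq_on_delta_left:
  assumes "finite S" "p \<in> S"
  shows "sesq_on S M (delta p) u = (\<Sum>q\<in>S. M p q * u q)"
proof -
  have "sesq_on S M (delta p) u = (\<Sum>i\<in>S. if i = p then (\<Sum>q\<in>S. M i q * u q) else 0)"
    unfolding sesq_on_def delta_def by (intro sum.cong) auto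
  then show ?thesis using assms by simp
qed

lemma sum_slice_snd:
  assumes "finite T"
  shows "(\<Sum>p\<in>T \<times> (UNIV :: 'v::finite set). if snd p = v then f p else 0) = (\<Sum>a\<in>T. f (a, v))"
proof -
  have "(\<Sum>p\<in>T \<times> (UNIV :: 'v set). if snd p = v then f p else 0)
      = (\<Sum>a\<in>T. \<Sum>v'\<in>UNIV. if v' = v then f (a, v') else 0)"
    by (subst sum.cartesian_product) (auto simp: case_prod_beta' intro!: sum.cong)
  then show ?thesis by simp
qed

lemma sum_slice_fst:
  assumes "finite T" "a \<in> T"
  shows "(\<Sum>p\<in>T \<times> (UNIV :: 'v::finite set). if fst p = a then f p else 0) = (\<Sum>v\<in>UNIV. f (a, v))"
proof -
  have "(\<Sum>p\<in>T \<times> (UNIV :: 'v set). if fst p = a then f p else 0)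
      = (\<Sum>a'\<in>T. \<Sum>v\<in>UNIV. if a' = a then f (a', v) else 0)"
    by (subst sum.cartesian_product) (auto simp: case_prod_beta' intro!: sum.cong)
  also have "\<dots> = (\<Sum>a'\<in>T. if a' = a then (\<Sum>v\<in>UNIV. f (a', v)) else 0)"
    by (intro sum.cong) auto
  finally show ?thesis using assms by simp
qed

text \<open>The vectors \<open>\<lambda>p. if snd p = v then u (fst p) else 0\<close> and
  \<open>\<lambda>p. if fst p = a then z (snd p) else 0\<close> encode \<open>u \<otimes> e\<^sub>v\<close> and \<open>e\<^sub>a \<otimes> z\<close>.\<close>

lemma sesq_on_slice_snd:
  fixes M :: "('s \<times> 'v::finite, 's \<times> 'v) lmat"
  assumes "finite T"
  shows "sesq_on (T \<times> UNIV) M (\<lambda>p. if snd p = v then u (fst p) else 0)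
           (\<lambda>p. if snd p = v' then u' (fst p) else 0)
         = sesq_on T (\<lambda>a b. M (a, v) (b, v')) u u'"
proof -
  have "sesq_on (T \<times> UNIV) M (\<lambda>p. if snd p = v then u (fst p) else 0)
           (\<lambda>p. if snd p = v' then u' (fst p) else 0)
      = (\<Sum>p\<in>T \<times> UNIV. if snd p = v then (\<Sum>q\<in>T \<times> UNIV. if snd q = v'
           then cnj (u (fst p)) * M p q * u' (fst q) else 0) else 0)"
    unfolding sesq_on_def by (intro sum.cong refl) (auto intro!: sum.cong)
  then show ?thesis
    using assms by (simp add: sum_slice_snd sesq_on_def)
qed

lemma sesq_on_slice_fst:
  fixes M :: "('s \<times> 'v::finite, 's \<times> 'v) lmat"
  assumes "finite T" "a \<in> T" "b \<in> T"
  shows "sesq_on (T \<times> UNIV) M (\<lambda>p. if fst p = a then z (snd p) else 0)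
           (\<lambda>p. if fst p = b then z' (snd p) else 0)
         = sesq_on UNIV (\<lambda>v v'. M (a, v) (b, v')) z z'"
proof -
  have "sesq_on (T \<times> UNIV) M (\<lambda>p. if fst p = a then z (snd p) else 0)
           (\<lambda>p. if fst p = b then z' (snd p) else 0)
      = (\<Sum>p\<in>T \<times> UNIV. if fst p = a then (\<Sum>q\<in>T \<times> UNIV. if fst q = b
           then cnj (z (snd p)) * M p q * z' (snd q) else 0) else 0)"
    unfolding sesq_on_def by (intro sum.cong refl) (auto intro!: sum.cong)
  then show ?thesis
    using assms by (simp add: sum_slice_fst sesq_on_def)
qed

lemma psd_on_rank1: "psd_on S (rank1 h h)"
proof -
  have "z * cnj z \<ge> 0" for z :: complex
    by (simp add: complex_mult_cnj less_eq_complex_def)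
  then show ?thesis
    by (simp only: psd_on_iff_sesq_on sesq_on_rank1) simp
qed

lemma psd_on_sum: "(\<And>y. y \<in> Y \<Longrightarrow> psd_on S (F y)) \<Longrightarrow> psd_on S (sum F Y)"
  unfolding psd_on_iff_sesq_on sesq_on_sum by (simp add: sum_nonneg)

lemma sesq_on_ptrace2:
  fixes N :: "('s \<times> 'v::finite, 's \<times> 'v) lmat"
  assumes "finite T"
  shows "sesq_on T (ptrace2 N) u u = (\<Sum>v\<in>UNIV.
    sesq_on (T \<times> UNIV) N (\<lambda>p. if snd p = v then u (fst p) else 0) (\<lambda>p. if snd p = v then u (fst p) else 0))"
proof -
  have "ptrace2 N = (\<Sum>v\<in>UNIV. (\<lambda>a b. N (a, v) (b, v)))"
    by (intro ext) (simp add: ptrace2_def sum_fun_apply)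
  then show ?thesis
    by (simp add: sesq_on_sum sesq_on_slice_snd[OF assms])
qed

lemma psd_on_ptrace2:
  fixes N :: "('s \<times> 'v::finite, 's \<times> 'v) lmat"
  assumes "finite T" and "psd_on (T \<times> UNIV) N"
  shows "psd_on T (ptrace2 N)"
  using assms unfolding psd_on_iff_sesq_on by (simp add: sesq_on_ptrace2 sum_nonneg)

lemma psd_on_reindex:
  assumes e: "bij_betw e A B" and "psd_on B N"
  shows "psd_on A (\<lambda>p q. N (e p) (e q))"
proof -
  have "sesq_on A (\<lambda>p q. N (e p) (e q)) v v = sesq_on B N (v \<circ> inv_into A e) (v \<circ> inv_into A e)" for v
  proof -
    have "sesq_on B N (v \<circ> inv_into A e) (v \<circ> inv_into A e) = (\<Sum>p\<in>A. \<Sum>q\<in>A.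
        cnj (v (inv_into A e (e p))) * N (e p) (e q) * v (inv_into A e (e q)))"
      unfolding sesq_on_def comp_def by (simp only: sum.reindex_bij_betw[OF e, symmetric])
    also have "\<dots> = sesq_on A (\<lambda>p q. N (e p) (e q)) v v"
      using e unfolding sesq_on_def bij_betw_def by (intro sum.cong) auto
    finally show ?thesis ..
  qed
  then show ?thesis
    using assms(2) unfolding psd_on_iff_sesq_on by simp
qed

lemma psd_on_cong:
  assumes "psd_on S N" and "\<And>p q. p \<in> S \<Longrightarrow> q \<in> S \<Longrightarrow> N p q = N' p q"
  shows "psd_on S N'"
proof -
  have "sesq_on S N u u = sesq_on S N' u u" for u
    unfolding sesq_on_def using assms(2) by (intro sum.cong) auto
  then show ?thesis
    using assms(1) unfolding psd_on_iff_sesq_on by simp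
qed

lemma linear_plus_quadratic_nonneg_imp_zero:
  fixes a b :: real
  assumes "\<And>e. a * e + b * e\<^sup>2 \<ge> 0" and "b \<ge> 0"
  shows "a = 0"
proof -
  define c where "c = b + 1"
  have c: "c > 0" "b = c - 1"
    using assms(2) by (auto simp: c_def)
  have "a * (- a / c) + b * (- a / c)\<^sup>2 = - (a\<^sup>2 / c\<^sup>2)"
    using c(1) unfolding c(2) by (simp add: field_simps power2_eq_square)
  then have "a\<^sup>2 / c\<^sup>2 \<le> 0"
    using assms(1)[of "- a / c"] by linarith
  then have "a\<^sup>2 \<le> 0"
    using c(1) by (simp add: divide_le_0_iff)
  then show ?thesis by simp
qed

text \<open>Expand the form at \<open>u + t z\<close> for real and for imaginary \<open>t\<close>.\<close>

lemma psd_on_null_vector: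
  assumes psd: "psd_on S M" and null: "sesq_on S M u u = 0"
  shows "sesq_on S M u z = 0" and "sesq_on S M z u = 0"
proof -
  define \<alpha> where "\<alpha> = sesq_on S M u z"
  define \<beta> where "\<beta> = sesq_on S M z u"
  define \<gamma> where "\<gamma> = sesq_on S M z z"
  have \<gamma>: "Im \<gamma> = 0" "Re \<gamma> \<ge> 0"
    using psd unfolding psd_on_iff_sesq_on \<gamma>_def by (auto simp: less_eq_complex_def)
  have nonneg: "Im (t * \<alpha> + cnj t * \<beta> + cnj t * t * \<gamma>) = 0 \<and> Re (t * \<alpha> + cnj t * \<beta> + cnj t * t * \<gamma>) \<ge> 0" for t
    using psd[unfolded psd_on_iff_sesq_on, rule_format, of "\<lambda>i. u i + t * z i"]
    by (simp add: sesq_on_add_scaled null \<alpha>_def \<beta>_def \<gamma>_def less_eq_complex_def)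
  have "Re (\<alpha> + \<beta>) = 0"
    using nonneg[of "complex_of_real e" for e] \<gamma>(2)
    by (intro linear_plus_quadratic_nonneg_imp_zero[of _ "Re \<gamma>"]) (auto simp: power2_eq_square algebra_simps)
  moreover have "Im (\<beta> - \<alpha>) = 0"
    using nonneg[of "\<i> * complex_of_real e" for e] \<gamma>(2)
    by (intro linear_plus_quadratic_nonneg_imp_zero[of _ "Re \<gamma>"]) (auto simp: power2_eq_square algebra_simps)
  moreover have "Im (\<alpha> + \<beta>) = 0" and "Re (\<alpha> - \<beta>) = 0"
    using nonneg[of 1] nonneg[of \<i>] \<gamma>(1) by simp_all
  ultimately have "\<alpha> = 0" and "\<beta> = 0"
    by (simp_all add: complex_eq_iff)
  then show "sesq_on S M u z = 0" and "sesq_on S M z u = 0"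
    by (simp_all add: \<alpha>_def \<beta>_def)
qed

lemma sesq_on_delta_delta: "sesq_on UNIV M (delta a) (delta b) = M (a::'a::finite) b"
proof -
  have "(\<Sum>p\<in>UNIV. cnj (delta a p) * M p b) = (\<Sum>p\<in>UNIV. if p = a then M p b else 0)"
    by (intro sum.cong) (auto simp: delta_def)
  then show ?thesis by (simp add: sesq_on_delta_right)
qed

lemma psd_diagonal_nonneg: "psd \<tau> \<Longrightarrow> \<tau> v v \<ge> 0"
  for \<tau> :: "('a::finite, 'a) lmat"
  unfolding psd_def psd_on_iff_sesq_on using sesq_on_delta_delta[of \<tau> v v] by metis

lemma psd_op_trace_nonneg: "psd \<tau> \<Longrightarrow> op_trace \<tau> \<ge> 0"
  unfolding op_trace_def by (simp add: psd_diagonal_nonneg sum_nonneg)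

lemma psd_op_trace_eq_0:
  assumes psd: "psd \<tau>" and "op_trace \<tau> = 0"
  shows "\<tau> = 0"
proof (intro ext)
  fix v w
  have "\<tau> v v = 0"
    using assms psd_diagonal_nonneg[OF psd] unfolding op_trace_def by (simp add: sum_nonneg_eq_0_iff)
  then have "sesq_on UNIV \<tau> (delta v) (delta v) = 0"
    by (simp add: sesq_on_delta_delta)
  from psd_on_null_vector(1)[OF psd[unfolded psd_def] this, of "delta w"]
  show "\<tau> v w = 0 v w"
    by (simp add: sesq_on_delta_delta)
qed

lemma psd_scale: "psd \<tau> \<Longrightarrow> c \<ge> 0 \<Longrightarrow> psd (op_scale c \<tau>)"
  unfolding psd_def psd_on_iff_sesq_on sesq_on_scale by simp

lemma psd_0: "psd 0"
  by (simp add: psd_def psd_on_iff_sesq_on sesq_on_def)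

lemma is_state_rank1_delta: "is_state (rank1 (delta a) (delta (a::'a::finite)))"
proof -
  have "op_trace (rank1 (delta a) (delta a)) = (\<Sum>i\<in>UNIV. if i = a then 1 else 0)"
    unfolding op_trace_def rank1_def delta_def by (intro sum.cong) auto
  then show ?thesis
    unfolding is_state_def psd_def by (simp add: psd_on_rank1)
qed

lemma psd_eq_scale_state:
  assumes psd: "psd \<tau>"
  shows "\<exists>\<xi>. is_state \<xi> \<and> \<tau> = op_scale (op_trace \<tau>) \<xi>"
proof (cases "op_trace \<tau> = 0")
  case True
  then show ?thesis
    using is_state_rank1_delta psd_op_trace_eq_0[OF psd] by auto
next
  case False
  define t where "t = Re (op_trace \<tau>)"
  have t: "op_trace \<tau> = complex_of_real t" "t > 0"
    using psd_op_trace_nonneg[OF psd] False by (auto simp: t_def less_eq_complex_def complex_eq_iff)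
  then have "is_state (op_scale (complex_of_real (1 / t)) \<tau>)"
    unfolding is_state_def using psd by (simp add: psd_scale op_trace_scale less_eq_complex_def)
  moreover have "\<tau> = op_scale (op_trace \<tau>) (op_scale (complex_of_real (1 / t)) \<tau>)"
    using t by (simp add: op_scale_scale flip: of_real_mult)
  ultimately show ?thesis
    by blast
qed

lemma lmat_eq_sum_rank1_delta:
  fixes X :: "('a::finite, 'b::finite) lmat"
  shows "X = (\<Sum>i\<in>UNIV. \<Sum>j\<in>UNIV. op_scale (X i j) (rank1 (delta i) (delta j)))"
proof (intro ext)
  fix a b
  have entry: "op_scale (X i j) (rank1 (delta i) (delta j)) a b = (if a = i then if b = j then X i j else 0 else 0)" for i j
    by (simp add: op_scale_def rank1_def delta_def)
  have "(\<Sum>i\<in>UNIV. \<Sum>j\<in>UNIV. op_scale (X i j) (rank1 (delta i) (delta j))) a b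
      = (\<Sum>i\<in>UNIV. if a = i then (\<Sum>j\<in>UNIV. if b = j then X i j else 0) else 0)"
    unfolding sum_fun_apply entry by (intro sum.cong) auto
  then show "X a b = (\<Sum>i\<in>UNIV. \<Sum>j\<in>UNIV. op_scale (X i j) (rank1 (delta i) (delta j))) a b"
    by simp
qed

lemma lin_map_expand:
  fixes X :: "('a::finite, 'a) lmat"
  assumes "lin_map L"
  shows "L X = (\<Sum>i\<in>UNIV. \<Sum>j\<in>UNIV. op_scale (X i j) (L (rank1 (delta i) (delta j))))"
  by (subst lmat_eq_sum_rank1_delta[of X]) (simp add: lin_map_sum[OF assms] assms[unfolded lin_map_def])

lemma lin_map_eq_on_rank1:
  fixes X :: "('a::finite, 'a) lmat"
  assumes "lin_map L1" and "lin_map L2" and "\<And>h g. L1 (rank1 h g) = L2 (rank1 h g)"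
  shows "L1 X = L2 X"
  by (simp only: lin_map_expand[OF assms(1), of X] lin_map_expand[OF assms(2), of X] assms(3))

lemma rank1_polarization:
  "rank1 h g = op_scale (1/4) (rank1 (\<lambda>i. h i + g i) (\<lambda>i. h i + g i))
     + op_scale (-1/4) (rank1 (\<lambda>i. h i - g i) (\<lambda>i. h i - g i))
     + op_scale (\<i>/4) (rank1 (\<lambda>i. h i + \<i> * g i) (\<lambda>i. h i + \<i> * g i))
     + op_scale (-\<i>/4) (rank1 (\<lambda>i. h i - \<i> * g i) (\<lambda>i. h i - \<i> * g i))"
  by (intro ext) (simp add: op_scale_def rank1_def field_simps)

text \<open>States span all operators: every \<open>|h\<rangle>\<langle>h|\<close> is a multiple of a state, and polarization
  reaches all \<open>|h\<rangle>\<langle>g|\<close>.\<close>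

lemma lin_map_eq_on_states:
  fixes X :: "('a::finite, 'a) lmat"
  assumes l1: "lin_map L1" and l2: "lin_map L2" and states: "\<And>\<rho>. is_state \<rho> \<Longrightarrow> L1 \<rho> = L2 \<rho>"
  shows "L1 X = L2 X"
proof (rule lin_map_eq_on_rank1[OF l1 l2])
  have diag: "L1 (rank1 h h) = L2 (rank1 h h)" for h :: "'a \<Rightarrow> complex"
  proof -
    obtain \<xi> where "is_state \<xi>" and "rank1 h h = op_scale (op_trace (rank1 h h)) \<xi>"
      using psd_eq_scale_state psd_on_rank1 unfolding psd_def by blast
    then show ?thesis
      using states l1 l2 unfolding lin_map_def by metis
  qed
  have lin: "L1 (X + Y) = L1 X + L1 Y" "L1 (op_scale c X) = op_scale c (L1 X)"
    "L2 (X + Y) = L2 X + L2 Y" "L2 (op_scale c X) = op_scale c (L2 X)" for X Y c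
    using l1 l2 unfolding lin_map_def by auto
  show "L1 (rank1 h g) = L2 (rank1 h g)" for h g
    by (subst (1 2) rank1_polarization) (simp only: lin diag)
qed

lemma induced_povm_op_trace:
  assumes lin: "lin_map (I x)" and "is_state \<rho>"
  shows "op_trace (op_mult (induced_povm I x) \<rho>) = op_trace (I x \<rho>)"
proof -
  define A where "A i j = op_trace (I x (rank1 (delta j) (delta i)))" for i j
  have "op_trace (op_mult A \<sigma>) = op_trace (I x \<sigma>)" for \<sigma>
  proof -
    have "op_trace (op_mult A \<sigma>) = (\<Sum>i\<in>UNIV. \<Sum>j\<in>UNIV. \<sigma> j i * op_trace (I x (rank1 (delta j) (delta i))))"
      by (simp add: op_trace_def op_mult_def A_def mult.commute)
    also have "\<dots> = (\<Sum>j\<in>UNIV. \<Sum>i\<in>UNIV. \<sigma> j i * op_trace (I x (rank1 (delta j) (delta i))))"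
      by (rule sum.swap)
    also have "\<dots> = op_trace (I x \<sigma>)"
      by (simp add: lin_map_expand[OF lin, of \<sigma>] op_trace_sum op_trace_scale)
    finally show ?thesis .
  qed
  then have "\<exists>A. \<forall>\<rho>. is_state \<rho> \<longrightarrow> op_trace (op_mult A \<rho>) = op_trace (I x \<rho>)"
    by blast
  from someI_ex[OF this] show ?thesis
    using assms(2) unfolding induced_povm_def by blast
qed

section \<open>Positive operators below a rank-one operator\<close>

lemma sum_cnj_delta:
  assumes "finite T" "a \<in> T"
  shows "(\<Sum>i\<in>T. cnj (delta a i) * m i) = m a"
proof -
  have "(\<Sum>i\<in>T. cnj (delta a i) * m i) = (\<Sum>i\<in>T. if i = a then m i else 0)"
    by (intro sum.cong) (auto simp: delta_def)
  then show ?thesis using assms by simp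
qed

text \<open>Test against \<open>cnj (w a\<^sub>0) e\<^sub>a - cnj (w a) e\<^sub>a\<^sub>0 \<perp> w\<close>.\<close>

lemma orthogonal_to_complement_imp_parallel:
  fixes w m :: "'s \<Rightarrow> complex"
  assumes fin: "finite T" and a: "a \<in> T" and a0: "a0 \<in> T"
    and orth: "\<And>u. (\<Sum>i\<in>T. cnj (u i) * w i) = 0 \<Longrightarrow> (\<Sum>i\<in>T. cnj (u i) * m i) = 0"
  shows "w a0 * m a = w a * m a0"
proof -
  define u where "u i = cnj (w a0) * delta a i - cnj (w a) * delta a0 i" for i
  have pairing: "(\<Sum>i\<in>T. cnj (u i) * f i) = w a0 * f a - w a * f a0" for f
  proof -
    have "(\<Sum>i\<in>T. cnj (u i) * f i)
        = (\<Sum>i\<in>T. w a0 * (cnj (delta a i) * f i) - w a * (cnj (delta a0 i) * f i))"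
      unfolding u_def by (intro sum.cong) (auto simp: algebra_simps)
    also have "\<dots> = w a0 * f a - w a * f a0"
      by (simp add: sum_subtractf sum_distrib_left[symmetric] sum_cnj_delta[OF fin a] sum_cnj_delta[OF fin a0])
    finally show ?thesis .
  qed
  show ?thesis
    using orth[of u] unfolding pairing by (simp add: mult.commute)
qed

lemma orthogonal_to_all_imp_zero:
  assumes "finite T" "a \<in> T" and "\<And>u. (\<Sum>i\<in>T. cnj (u i) * m i) = 0"
  shows "m a = 0"
  using assms(3)[of "delta a"] by (simp add: sum_cnj_delta[OF assms(1,2)])

lemma psd_diagonal_block:
  fixes M :: "('s \<times> 'v::finite, 's \<times> 'v) lmat"
  assumes "finite T" "a \<in> T" and "psd_on (T \<times> UNIV) M"
  shows "psd (\<lambda>v v'. M (a, v) (a, v'))"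
  using assms(3) unfolding psd_def psd_on_iff_sesq_on sesq_on_slice_fst[OF assms(1,2,2), symmetric]
  by blast

lemma delta_pair: "delta (b, v) = (\<lambda>p. if snd p = v then delta b (fst p) else 0)"
  by (auto simp: delta_def)

text \<open>For \<open>u \<perp> w\<close> the bound \<open>tr\<^sub>V M \<le> |w\<rangle>\<langle>w|\<close> forces the form of \<open>M\<close> to vanish on
  every \<open>u \<otimes> e\<^sub>v\<close>, so by positivity these vectors lie in the kernel of \<open>M\<close>.\<close>

lemma psd_below_rank1_annihilates:
  fixes M :: "('s \<times> 'v::finite, 's \<times> 'v) lmat"
  assumes fin: "finite T" and psd_M: "psd_on (T \<times> UNIV) M"
    and below: "psd_on T (rank1 w w - ptrace2 M)"
    and orth: "(\<Sum>a\<in>T. cnj (u a) * w a) = 0" and b: "b \<in> T"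
  shows "(\<Sum>a\<in>T. cnj (u a) * M (a, v) (b, v')) = 0"
    and "(\<Sum>a\<in>T. M (b, v') (a, v) * u a) = 0"
proof -
  define slice where "slice v = (\<lambda>p::'s \<times> 'v. if snd p = v then u (fst p) else 0)" for v
  have slice_nonneg: "sesq_on (T \<times> UNIV) M (slice v) (slice v) \<ge> 0" for v
    using psd_M by (simp add: psd_on_iff_sesq_on)
  have "0 \<le> sesq_on T (rank1 w w - ptrace2 M) u u"
    using below by (simp add: psd_on_iff_sesq_on)
  also have "\<dots> = - (\<Sum>v\<in>UNIV. sesq_on (T \<times> UNIV) M (slice v) (slice v))"
    using orth by (simp add: sesq_on_diff sesq_on_rank1 sesq_on_ptrace2[OF fin] slice_def)
  finally have "(\<Sum>v\<in>UNIV. sesq_on (T \<times> UNIV) M (slice v) (slice v)) \<le> 0"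
    by (simp add: neg_0_le_iff_le)
  then have "(\<Sum>v\<in>UNIV. sesq_on (T \<times> UNIV) M (slice v) (slice v)) = 0"
    using slice_nonneg by (meson order.antisym sum_nonneg)
  then have null: "sesq_on (T \<times> UNIV) M (slice v) (slice v) = 0"
    using slice_nonneg by (simp add: sum_nonneg_eq_0_iff)
  show "(\<Sum>a\<in>T. cnj (u a) * M (a, v) (b, v')) = 0"
    using psd_on_null_vector(1)[OF psd_M null, of "delta (b, v')"]
    by (simp add: slice_def delta_pair sesq_on_slice_snd[OF fin] sesq_on_delta_right[OF fin b])
  show "(\<Sum>a\<in>T. M (b, v') (a, v) * u a) = 0"
    using psd_on_null_vector(2)[OF psd_M null, of "delta (b, v')"]
    by (simp add: slice_def delta_pair sesq_on_slice_snd[OF fin] sesq_on_delta_left[OF fin b])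
qed

lemma psd_below_rank1_parallel:
  fixes M :: "('s \<times> 'v::finite, 's \<times> 'v) lmat"
  assumes fin: "finite T" and psd_M: "psd_on (T \<times> UNIV) M"
    and below: "psd_on T (rank1 w w - ptrace2 M)"
    and a: "a \<in> T" and a0: "a0 \<in> T" and b: "b \<in> T"
  shows "w a0 * M (a, v) (b, v') = w a * M (a0, v) (b, v')"
    and "cnj (w a0) * M (b, v') (a, v) = cnj (w a) * M (b, v') (a0, v)"
proof -
  show "w a0 * M (a, v) (b, v') = w a * M (a0, v) (b, v')"
    using psd_below_rank1_annihilates(1)[OF fin psd_M below _ b]
    by (rule orthogonal_to_complement_imp_parallel[OF fin a a0])
  have "w a0 * cnj (M (b, v') (a, v)) = w a * cnj (M (b, v') (a0, v))"
  proof (rule orthogonal_to_complement_imp_parallel[OF fin a a0])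
    fix u
    assume "(\<Sum>i\<in>T. cnj (u i) * w i) = 0"
    then have "cnj (\<Sum>i\<in>T. M (b, v') (i, v) * u i) = 0"
      using psd_below_rank1_annihilates(2)[OF fin psd_M below _ b] by simp
    then show "(\<Sum>i\<in>T. cnj (u i) * cnj (M (b, v') (i, v))) = 0"
      by (simp add: mult.commute)
  qed
  then show "cnj (w a0) * M (b, v') (a, v) = cnj (w a) * M (b, v') (a0, v)"
    by (metis complex_cnj_cnj complex_cnj_mult)
qed

lemma psd_below_rank1_factorizes:
  fixes M :: "('s \<times> 'v::finite, 's \<times> 'v) lmat"
  assumes fin: "finite T" and psd_M: "psd_on (T \<times> UNIV) M"
    and below: "psd_on T (rank1 w w - ptrace2 M)"
  obtains \<tau> where "psd \<tau>"
    and "\<And>a b v v'. a \<in> T \<Longrightarrow> b \<in> T \<Longrightarrow> M (a, v) (b, v') = w a * cnj (w b) * \<tau> v v'"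
proof (cases "\<forall>a\<in>T. w a = 0")
  case True
  have "M (a, v) (b, v') = 0" if "a \<in> T" "b \<in> T" for a b v v'
    using True psd_below_rank1_annihilates(1)[OF fin psd_M below _ that(2)]
    by (intro orthogonal_to_all_imp_zero[OF fin that(1)]) simp
  then show ?thesis
    using True that psd_0 by auto
next
  case False
  then obtain a0 where a0: "a0 \<in> T" "w a0 \<noteq> 0"
    by blast
  note parallel = psd_below_rank1_parallel[OF fin psd_M below]
  define \<tau> where "\<tau> = op_scale (complex_of_real (1 / (cmod (w a0))\<^sup>2)) (\<lambda>v v'. M (a0, v) (a0, v'))"
  have "psd \<tau>"
    unfolding \<tau>_def
    by (intro psd_scale psd_diagonal_block[OF fin a0(1) psd_M]) (simp add: less_eq_complex_def)
  moreover have "M (a, v) (b, v') = w a * cnj (w b) * \<tau> v v'" if "a \<in> T" "b \<in> T" for a b v v'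
  proof -
    have "M (a, v) (b, v') = w a * M (a0, v) (b, v') / w a0"
      using parallel(1)[OF that(1) a0(1) that(2)] a0(2) by (simp add: field_simps)
    also have "M (a0, v) (b, v') = cnj (w b) * M (a0, v) (a0, v') / cnj (w a0)"
      using parallel(2)[OF that(2) a0(1) a0(1)] a0(2) by (simp add: field_simps)
    finally have "M (a, v) (b, v') = w a * cnj (w b) * M (a0, v) (a0, v') / (w a0 * cnj (w a0))"
      using a0(2) by (simp add: field_simps)
    then show ?thesis
      by (simp add: \<tau>_def op_scale_def complex_norm_square[symmetric])
  qed
  ultimately show ?thesis
    using that by blast
qed

section \<open>Completely positive maps with a Kraus-rank-one marginal\<close>

text \<open>Complete positivity applied to the block vector \<open>\<oplus>\<^sub>i f\<^sub>i\<close>, with the indices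
  regrouped as \<open>((i, k), v)\<close>.\<close>

lemma completely_positive_block_psd:
  fixes \<Phi> :: "('h::finite, 'h) lmat \<Rightarrow> ('k \<times> 'v, 'k \<times> 'v) lmat"
    and f :: "nat \<Rightarrow> 'h \<Rightarrow> complex"
  assumes "completely_positive \<Phi>"
  shows "psd_on (({..<n} \<times> UNIV) \<times> UNIV) (\<lambda>p q.
    \<Phi> (rank1 (f (fst (fst p))) (f (fst (fst q)))) (snd (fst p), snd p) (snd (fst q), snd q))"
proof -
  define X :: "(nat \<times> 'h, nat \<times> 'h) lmat" where "X = rank1 (\<lambda>p. f (fst p) (snd p)) (\<lambda>p. f (fst p) (snd p))"
  define e :: "(nat \<times> 'k) \<times> 'v \<Rightarrow> nat \<times> ('k \<times> 'v)" where "e p = (fst (fst p), (snd (fst p), snd p))" for p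
  have "psd_on ({..<n} \<times> UNIV) (ampliate n \<Phi> X)"
    using assms psd_on_rank1 unfolding completely_positive_def X_def by blast
  moreover have "bij_betw e (({..<n} \<times> UNIV) \<times> UNIV) ({..<n} \<times> UNIV)"
    unfolding bij_betw_def inj_on_def e_def by (auto simp: image_iff)
  ultimately have "psd_on (({..<n} \<times> UNIV) \<times> UNIV) (\<lambda>p q. ampliate n \<Phi> X (e p) (e q))"
    by (rule psd_on_reindex[rotated])
  then show ?thesis
    by (rule psd_on_cong) (auto simp: ampliate_def e_def X_def rank1_def case_prod_beta)
qed

text \<open>The blocks \<open>\<Phi>\<^sub>y(|f\<^sub>i\<rangle>\<langle>f\<^sub>j|)\<close> form a positive operator whose \<open>K\<close>-marginal lies
  below the rank-one operator with blocks \<open>|K f\<^sub>i\<rangle>\<langle>K f\<^sub>j|\<close>: the other \<open>\<Phi>\<^sub>y\<^sub>'\<close> make up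
  the difference.\<close>

lemma cp_family_factorizes_on_block:
  fixes \<Phi> :: "'y::finite \<Rightarrow> ('h::finite, 'h) lmat \<Rightarrow> ('k::finite \<times> 'v::finite, 'k \<times> 'v) lmat"
    and f :: "nat \<Rightarrow> 'h \<Rightarrow> complex"
  assumes cp: "\<And>y. completely_positive (\<Phi> y)"
    and marginal: "\<And>X. (\<Sum>y\<in>UNIV. ptrace2 (\<Phi> y X)) = kraus1 K X"
  shows "\<exists>\<tau>. psd \<tau> \<and>
    (\<forall>i<n. \<forall>j<n. \<Phi> y (rank1 (f i) (f j)) = tens (kraus1 K (rank1 (f i) (f j))) \<tau>)"
proof -
  define T :: "(nat \<times> 'k) set" where "T = {..<n} \<times> UNIV"
  have fin: "finite T"
    by (simp add: T_def)
  define M where "M y' p q = \<Phi> y' (rank1 (f (fst (fst p))) (f (fst (fst q))))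
    (snd (fst p), snd p) (snd (fst q), snd q)" for y' and p q :: "(nat \<times> 'k) \<times> 'v"
  define w where "w a = matvec K (f (fst a)) (snd a)" for a :: "nat \<times> 'k"
  have psd_M: "psd_on (T \<times> UNIV) (M y')" for y'
    unfolding T_def M_def by (rule completely_positive_block_psd[OF cp])
  have "(\<Sum>y'\<in>UNIV. ptrace2 (M y')) = rank1 w w"
  proof (intro ext)
    fix a b :: "nat \<times> 'k"
    have "(\<Sum>y'\<in>UNIV. ptrace2 (\<Phi> y' (rank1 (f (fst a)) (f (fst b))))) (snd a) (snd b)
        = kraus1 K (rank1 (f (fst a)) (f (fst b))) (snd a) (snd b)"
      by (simp add: marginal)
    then show "(\<Sum>y'\<in>UNIV. ptrace2 (M y')) a b = rank1 w w a b"
      unfolding kraus1_rank1 by (simp add: sum_fun_apply ptrace2_def M_def w_def rank1_def)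
  qed
  moreover have "(\<Sum>y'\<in>UNIV. ptrace2 (M y')) = ptrace2 (M y) + (\<Sum>y'\<in>UNIV - {y}. ptrace2 (M y'))"
    by (rule sum.remove) simp_all
  ultimately have "rank1 w w - ptrace2 (M y) = (\<Sum>y'\<in>UNIV - {y}. ptrace2 (M y'))"
    by (metis add_diff_cancel_left')
  then have "psd_on T (rank1 w w - ptrace2 (M y))"
    by (simp add: psd_on_sum psd_on_ptrace2[OF fin psd_M])
  then obtain \<tau> where "psd \<tau>"
    and \<tau>: "\<And>a b v v'. a \<in> T \<Longrightarrow> b \<in> T \<Longrightarrow> M y (a, v) (b, v') = w a * cnj (w b) * \<tau> v v'"
    using psd_below_rank1_factorizes[OF fin psd_M] by blast
  moreover have "\<Phi> y (rank1 (f i) (f j)) = tens (kraus1 K (rank1 (f i) (f j))) \<tau>" if "i < n" "j < n" for i j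
  proof (intro ext)
    fix p q :: "'k \<times> 'v"
    have "M y ((i, fst p), snd p) ((j, fst q), snd q) = w (i, fst p) * cnj (w (j, fst q)) * \<tau> (snd p) (snd q)"
      using \<tau> that unfolding T_def by auto
    then show "\<Phi> y (rank1 (f i) (f j)) p q = tens (kraus1 K (rank1 (f i) (f j))) \<tau> p q"
      unfolding kraus1_rank1 by (simp add: M_def w_def tens_def rank1_def)
  qed
  ultimately show ?thesis
    by blast
qed

text \<open>Factorize the block of \<open>h\<^sub>0, h, g\<close> and cancel the \<open>(h\<^sub>0, h\<^sub>0)\<close> entry.\<close>

lemma cp_family_factor_determined:
  fixes \<Phi> :: "'y::finite \<Rightarrow> ('h::finite, 'h) lmat \<Rightarrow> ('k::finite \<times> 'v::finite, 'k \<times> 'v) lmat"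
  assumes cp: "\<And>y. completely_positive (\<Phi> y)"
    and marginal: "\<And>X. (\<Sum>y\<in>UNIV. ptrace2 (\<Phi> y X)) = kraus1 K X"
    and h0: "matvec K h0 \<noteq> 0" and \<tau>: "\<Phi> y (rank1 h0 h0) = tens (kraus1 K (rank1 h0 h0)) \<tau>"
  shows "\<Phi> y (rank1 h g) = tens (kraus1 K (rank1 h g)) \<tau>"
proof -
  obtain \<tau>' where "\<forall>i<3. \<forall>j<3. \<Phi> y (rank1 ([h0, h, g] ! i) ([h0, h, g] ! j))
      = tens (kraus1 K (rank1 ([h0, h, g] ! i) ([h0, h, g] ! j))) \<tau>'"
    using cp_family_factorizes_on_block[OF cp marginal, where n=3 and f="\<lambda>i. [h0, h, g] ! i"] by blast
  from this[rule_format, of 0 0] this[rule_format, of 1 2]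
  have \<tau>'0: "\<Phi> y (rank1 h0 h0) = tens (kraus1 K (rank1 h0 h0)) \<tau>'"
    and \<tau>': "\<Phi> y (rank1 h g) = tens (kraus1 K (rank1 h g)) \<tau>'"
    by simp_all
  have "\<tau>' = \<tau>"
    using \<tau> \<tau>'0 h0 by (simp add: kraus1_rank1 tens_rank1_cancel)
  then show ?thesis
    using \<tau>' by simp
qed

lemma cp_family_factorizes:
  fixes \<Phi> :: "'y::finite \<Rightarrow> ('h::finite, 'h) lmat \<Rightarrow> ('k::finite \<times> 'v::finite, 'k \<times> 'v) lmat"
  assumes cp: "\<And>y. completely_positive (\<Phi> y)"
    and marginal: "\<And>X. (\<Sum>y\<in>UNIV. ptrace2 (\<Phi> y X)) = kraus1 K X"
  shows "\<exists>\<tau>. psd \<tau> \<and> (\<forall>X. \<Phi> y X = tens (kraus1 K X) \<tau>)"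
proof -
  note block = cp_family_factorizes_on_block[OF cp marginal]
  obtain \<tau> where "psd \<tau>" and on_rank1: "\<And>h g. \<Phi> y (rank1 h g) = tens (kraus1 K (rank1 h g)) \<tau>"
  proof (cases "\<exists>h0. matvec K h0 \<noteq> 0")
    case True
    then obtain h0 where h0: "matvec K h0 \<noteq> 0"
      by blast
    obtain \<tau> where "psd \<tau>" and "\<Phi> y (rank1 h0 h0) = tens (kraus1 K (rank1 h0 h0)) \<tau>"
      using block[where n=1 and f="\<lambda>_. h0" and y=y] by auto
    then show ?thesis
      using that cp_family_factor_determined[OF cp marginal h0] by blast
  next
    case False
    then have zero: "kraus1 K (rank1 h g) = 0" for h g
      unfolding kraus1_rank1 by (simp add: rank1_def zero_fun_def)
    have \<Phi>_zero: "\<Phi> y (rank1 h g) = 0" for h g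
    proof -
      obtain \<tau>' where "\<forall>i<2. \<forall>j<2. \<Phi> y (rank1 ([h, g] ! i) ([h, g] ! j))
          = tens (kraus1 K (rank1 ([h, g] ! i) ([h, g] ! j))) \<tau>'"
        using block[where n=2 and f="\<lambda>i. [h, g] ! i" and y=y] by blast
      from this[rule_format, of 0 1] show ?thesis
        by (simp add: zero tens_def zero_fun_def)
    qed
    show ?thesis
    proof (rule that)
      show "psd (0 :: ('v, 'v) lmat)"
        by (rule psd_0)
      show "\<Phi> y (rank1 h g) = tens (kraus1 K (rank1 h g)) 0" for h g
        by (simp add: \<Phi>_zero zero tens_def zero_fun_def)
    qed
  qed
  moreover have "\<Phi> y X = tens (kraus1 K X) \<tau>" for X
    by (rule lin_map_eq_on_rank1[OF completely_positive_lin_map[OF cp] lin_map_tens_kraus1 on_rank1])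
  ultimately show ?thesis
    by blast
qed

lemma cp_family_ptrace1_factorizes:
  fixes \<Phi> :: "'y::finite \<Rightarrow> ('h::finite, 'h) lmat \<Rightarrow> ('k::finite \<times> 'v::finite, 'k \<times> 'v) lmat"
  assumes cp: "\<And>y. completely_positive (\<Phi> y)"
    and marginal: "\<And>X. (\<Sum>y\<in>UNIV. ptrace2 (\<Phi> y X)) = kraus1 K X"
  shows "\<exists>(\<nu> :: 'y \<Rightarrow> real) \<xi>. (\<forall>y. \<nu> y \<ge> 0) \<and> (\<forall>y. is_state (\<xi> y)) \<and> (\<Sum>y\<in>UNIV. \<nu> y) = 1 \<and>
    (\<forall>y X. ptrace1 (\<Phi> y X) = op_scale (complex_of_real (\<nu> y) * op_trace (kraus1 K X)) (\<xi> y))"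
proof -
  obtain \<tau> where psd_\<tau>: "\<And>y. psd (\<tau> y)" and \<Phi>_\<tau>: "\<And>y X. \<Phi> y X = tens (kraus1 K X) (\<tau> y)"
    using cp_family_factorizes[OF cp marginal] by metis
  obtain \<xi> where \<xi>: "\<And>y. is_state (\<xi> y)" and \<tau>_\<xi>: "\<And>y. \<tau> y = op_scale (op_trace (\<tau> y)) (\<xi> y)"
    using psd_eq_scale_state[OF psd_\<tau>] by metis
  have ptrace1_\<Phi>: "ptrace1 (\<Phi> y X) = op_scale (op_trace (\<tau> y) * op_trace (kraus1 K X)) (\<xi> y)" for y X
  proof -
    have "ptrace1 (\<Phi> y X) = op_scale (op_trace (kraus1 K X)) (\<tau> y)"
      by (simp add: \<Phi>_\<tau> ptrace1_tens)
    also have "\<dots> = op_scale (op_trace (kraus1 K X)) (op_scale (op_trace (\<tau> y)) (\<xi> y))"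
      by (rule arg_cong[OF \<tau>_\<xi>])
    finally show ?thesis
      by (simp add: op_scale_scale mult.commute)
  qed
  show ?thesis
  proof (cases "\<forall>X. kraus1 K X = 0")
    case True
    \<comment> \<open>the weights do not matter here; take them uniform\<close>
    show ?thesis
      by (intro exI[of _ "\<lambda>_. 1 / card (UNIV :: 'y set)"] exI[of _ \<xi>]) (simp add: \<xi> ptrace1_\<Phi> True)
  next
    case False
    then obtain X where X: "kraus1 K X \<noteq> 0"
      by blast
    have "op_scale (\<Sum>y\<in>UNIV. op_trace (\<tau> y)) (kraus1 K X) = kraus1 K X"
      using marginal[of X] by (simp add: \<Phi>_\<tau> ptrace2_tens sum_op_scale)
    then have "(\<Sum>y\<in>UNIV. op_trace (\<tau> y)) = 1"
      using X by (rule op_scale_eq_self_imp_1)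
    moreover have "op_trace (\<tau> y) = complex_of_real (Re (op_trace (\<tau> y)))" and "Re (op_trace (\<tau> y)) \<ge> 0" for y
      using psd_op_trace_nonneg[OF psd_\<tau>, of y] by (simp_all add: less_eq_complex_def complex_eq_iff)
    ultimately show ?thesis
      by (intro exI[of _ "\<lambda>y. Re (op_trace (\<tau> y))"] exI[of _ \<xi>]) (simp add: \<xi> ptrace1_\<Phi> flip: Re_sum)
  qed
qed

lemma compatible_joint_instrument_kraus_marginal:
  fixes I :: "'x::finite \<Rightarrow> ('h::finite, 'h) lmat \<Rightarrow> ('k::finite, 'k) lmat"
    and J :: "'y::finite \<Rightarrow> ('h, 'h) lmat \<Rightarrow> ('v::finite, 'v) lmat"
  assumes "indecomposable I" and "compatible I J"
  obtains G :: "'x \<times> 'y \<Rightarrow> ('h, 'h) lmat \<Rightarrow> ('k \<times> 'v, 'k \<times> 'v) lmat" and K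
  where "\<And>p. completely_positive (G p)" and "\<And>x. I x = kraus1 (K x)"
    and "\<And>x X. (\<Sum>y\<in>UNIV. ptrace2 (G (x, y) X)) = kraus1 (K x) X"
    and "\<And>\<rho> y. is_state \<rho> \<Longrightarrow> (\<Sum>x\<in>UNIV. ptrace1 (G (x, y) \<rho>)) = J y \<rho>"
proof -
  obtain G :: "'x \<times> 'y \<Rightarrow> ('h, 'h) lmat \<Rightarrow> ('k \<times> 'v, 'k \<times> 'v) lmat"
    where G: "instrument G"
      and G_J: "\<And>\<rho> y. is_state \<rho> \<Longrightarrow> (\<Sum>x\<in>UNIV. ptrace1 (G (x, y) \<rho>)) = J y \<rho>"
      and G_I: "\<And>\<rho> x. is_state \<rho> \<Longrightarrow> (\<Sum>y\<in>UNIV. ptrace2 (G (x, y) \<rho>)) = I x \<rho>"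
    using assms(2) unfolding compatible_def by blast
  have cp_G: "completely_positive (G p)" for p
    using G unfolding instrument_def by blast
  obtain K where K: "\<And>x. I x = kraus1 (K x)"
    using indecomposable_imp_kraus1[OF assms(1)] by metis
  have "(\<Sum>y\<in>UNIV. ptrace2 (G (x, y) X)) = kraus1 (K x) X" for x X
    by (rule lin_map_eq_on_states[OF lin_map_sum_maps[OF lin_map_ptrace2_comp[OF
          completely_positive_lin_map[OF cp_G]]] lin_map_kraus1]) (simp add: G_I K)
  with cp_G K G_J show ?thesis
    using that by blast
qed

theorem corollary6:
  fixes I :: "'x::finite \<Rightarrow> ('h::finite, 'h) lmat \<Rightarrow> ('k::finite, 'k) lmat"
    and J :: "'y::finite \<Rightarrow> ('h, 'h) lmat \<Rightarrow> ('v::finite, 'v) lmat"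
  assumes "instrument I" and "indecomposable I"
    and "instrument J" and "compatible I J"
  shows "\<exists>(\<xi> :: 'x \<Rightarrow> 'y \<Rightarrow> ('v, 'v) lmat) (\<nu> :: 'x \<Rightarrow> 'y \<Rightarrow> real).
           (\<forall>x y. is_state (\<xi> x y)) \<and> (\<forall>x y. \<nu> x y \<ge> 0) \<and> (\<forall>x. (\<Sum>y\<in>UNIV. \<nu> x y) = 1) \<and>
           (\<forall>y \<rho>. is_state \<rho> \<longrightarrow>
              J y \<rho> = (\<Sum>x\<in>UNIV. op_scale
                 (op_trace (op_mult (op_scale (complex_of_real (\<nu> x y)) (induced_povm I x)) \<rho>))
                 (\<xi> x y)))"
proof -
  obtain G :: "'x \<times> 'y \<Rightarrow> ('h, 'h) lmat \<Rightarrow> ('k \<times> 'v, 'k \<times> 'v) lmat" and K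
    where cp_G: "\<And>p. completely_positive (G p)" and K: "\<And>x. I x = kraus1 (K x)"
      and marginal: "\<And>x X. (\<Sum>y\<in>UNIV. ptrace2 (G (x, y) X)) = kraus1 (K x) X"
      and G_J: "\<And>\<rho> y. is_state \<rho> \<Longrightarrow> (\<Sum>x\<in>UNIV. ptrace1 (G (x, y) \<rho>)) = J y \<rho>"
    using compatible_joint_instrument_kraus_marginal[OF assms(2,4)] by blast
  obtain \<nu> \<xi> where "\<And>x y. \<nu> x y \<ge> 0" "\<And>x y. is_state (\<xi> x y)" "\<And>x. (\<Sum>y\<in>UNIV. \<nu> x y) = 1"
    and G_\<nu>\<xi>: "\<And>x y X. ptrace1 (G (x, y) X) = op_scale (complex_of_real (\<nu> x y) * op_trace (I x X)) (\<xi> x y)"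
    using cp_family_ptrace1_factorizes[OF cp_G marginal] unfolding K by metis
  moreover have "J y \<rho> = (\<Sum>x\<in>UNIV. op_scale
      (op_trace (op_mult (op_scale (complex_of_real (\<nu> x y)) (induced_povm I x)) \<rho>)) (\<xi> x y))"
    if "is_state \<rho>" for y \<rho>
  proof -
    have "op_trace (op_mult (induced_povm I x) \<rho>) = op_trace (I x \<rho>)" for x
      by (rule induced_povm_op_trace[OF _ that]) (simp add: K lin_map_kraus1)
    then show ?thesis
      using G_J[OF that, of y] by (simp add: G_\<nu>\<xi> op_trace_mult_scale)
  qed
  ultimately show ?thesis
    by blast
qed

end
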